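(* Let $G$ be a $\gamma_t$-critical graph of order $n$ with $\gamma_t(G)=n-\Delta(G)$ and $\delta(G)\ge 2$. Then $G$ is connected.
   Context: All graphs are finite and simple; $\Delta(G)$, $\delta(G)$ are maximum and minimum degree. A set $S\subseteq V(G)$ is a total dominating set if every vertex of $G$ is adjacent to some vertex of $S$; $\gamma_t(G)$ is the minimum size of such a set. A leaf is a vertex of degree one. A graph $G$ with no isolated vertex is $\gamma_t$-critical if for every vertex $v$ not adjacent to a leaf, $\gamma_t(G-v)<\gamma_t(G)$. *)

theory Defs
  imports Main
begin

definition simple_graph :: "'a set \<Rightarrow> ('a \<Rightarrow> 'a \<Rightarrow> bool) \<Rightarrow> bool" where
  "simple_graph V E \<longleftrightarrow> finite V \<and> (\<forall>x y. E x y \<longrightarrow> E y x)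
      \<and> (\<forall>x. \<not> E x x) \<and> (\<forall>x y. E x y \<longrightarrow> x \<in> V \<and> y \<in> V)"

definition nbhd :: "'a set \<Rightarrow> ('a \<Rightarrow> 'a \<Rightarrow> bool) \<Rightarrow> 'a \<Rightarrow> 'a set" where
  "nbhd V E x = {y \<in> V. E x y}"

definition degree :: "'a set \<Rightarrow> ('a \<Rightarrow> 'a \<Rightarrow> bool) \<Rightarrow> 'a \<Rightarrow> nat" where
  "degree V E x = card (nbhd V E x)"

definition max_degree :: "'a set \<Rightarrow> ('a \<Rightarrow> 'a \<Rightarrow> bool) \<Rightarrow> nat" where
  "max_degree V E = Max (degree V E ` V)"

definition min_degree :: "'a set \<Rightarrow> ('a \<Rightarrow> 'a \<Rightarrow> bool) \<Rightarrow> nat" where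
  "min_degree V E = Min (degree V E ` V)"

definition is_leaf :: "'a set \<Rightarrow> ('a \<Rightarrow> 'a \<Rightarrow> bool) \<Rightarrow> 'a \<Rightarrow> bool" where
  "is_leaf V E x \<longleftrightarrow> x \<in> V \<and> degree V E x = 1"

definition no_isolated :: "'a set \<Rightarrow> ('a \<Rightarrow> 'a \<Rightarrow> bool) \<Rightarrow> bool" where
  "no_isolated V E \<longleftrightarrow> (\<forall>x\<in>V. degree V E x \<noteq> 0)"

definition total_dominating :: "'a set \<Rightarrow> ('a \<Rightarrow> 'a \<Rightarrow> bool) \<Rightarrow> 'a set \<Rightarrow> bool" where
  "total_dominating V E S \<longleftrightarrow> S \<subseteq> V \<and> (\<forall>x\<in>V. \<exists>s\<in>S. E x s)"

definition gamma_t :: "'a set \<Rightarrow> ('a \<Rightarrow> 'a \<Rightarrow> bool) \<Rightarrow> nat" where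
  "gamma_t V E = (LEAST k. \<exists>S. total_dominating V E S \<and> card S = k)"

text \<open>Vertex deletion G - v: induced subgraph on V - {v}.\<close>
definition del_vertex_rel :: "('a \<Rightarrow> 'a \<Rightarrow> bool) \<Rightarrow> 'a \<Rightarrow> 'a \<Rightarrow> 'a \<Rightarrow> bool" where
  "del_vertex_rel E v = (\<lambda>x y. E x y \<and> x \<noteq> v \<and> y \<noteq> v)"

definition gamma_t_critical :: "'a set \<Rightarrow> ('a \<Rightarrow> 'a \<Rightarrow> bool) \<Rightarrow> bool" where
  "gamma_t_critical V E \<longleftrightarrow> no_isolated V E \<and>
     (\<forall>v\<in>V. (\<forall>u. E v u \<longrightarrow> \<not> is_leaf V E u) \<longrightarrow>
        gamma_t (V - {v}) (del_vertex_rel E v) < gamma_t V E)"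

definition connected_graph :: "'a set \<Rightarrow> ('a \<Rightarrow> 'a \<Rightarrow> bool) \<Rightarrow> bool" where
  "connected_graph V E \<longleftrightarrow> (\<forall>x\<in>V. \<forall>y\<in>V. (\<lambda>a b. a \<in> V \<and> b \<in> V \<and> E a b)\<^sup>*\<^sup>* x y)"

end

theory Submission
  imports Defs
begin

(* Let v be a vertex of maximum degree \<Delta> and N its
   neighbourhood.  Since \<delta>(G) \<ge> 2 no neighbour of v is a leaf, so criticality gives
   \<gamma>_t(G - v) < \<gamma>_t(G).  A minimum total dominating set S of G - v therefore misses N:
   otherwise S would already dominate v and be a smaller total dominating set of G.
   If G were disconnected, pick d outside the component of v and u \<in> N.  Then
     T = (V - (N \<union> {v, d})) \<union> {u}
   is a total dominating set of G: u dominates v, S (which avoids N, v and d) dominates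
   the rest of the component of v, and every vertex outside it has, by \<delta> \<ge> 2, a
   neighbour different from d, which lies outside N \<union> {v}.  As |T| \<le> n - \<Delta> - 1 we get
   \<gamma>_t(G) < n - \<Delta>, a contradiction. *)

lemma simple_graphD:
  assumes "simple_graph V E"
  shows "finite V" and "\<And>x y. E x y \<Longrightarrow> E y x" and "\<And>x. \<not> E x x"
    and "\<And>x y. E x y \<Longrightarrow> x \<in> V" and "\<And>x y. E x y \<Longrightarrow> y \<in> V"
  using assms unfolding simple_graph_def by blast+

lemma connected_graph_iff:
  assumes "simple_graph V E"
  shows "connected_graph V E \<longleftrightarrow> (\<forall>x\<in>V. \<forall>y\<in>V. E\<^sup>*\<^sup>* x y)"
proof -
  have "(\<lambda>a b. a \<in> V \<and> b \<in> V \<and> E a b) = E"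
    using simple_graphD(4,5)[OF assms] by blast
  then show ?thesis unfolding connected_graph_def by simp
qed

lemma disconnected_unreachable:
  assumes "simple_graph V E" and "\<not> connected_graph V E" and "v \<in> V"
  obtains d where "d \<in> V" and "\<not> E\<^sup>*\<^sup>* v d"
proof -
  have sym: "symp E\<^sup>*\<^sup>*"
    using simple_graphD(2)[OF assms(1)] by (intro symp_rtranclp sympI) blast
  obtain x y where "x \<in> V" "y \<in> V" "\<not> E\<^sup>*\<^sup>* x y"
    using assms(1,2) connected_graph_iff by blast
  moreover have "\<not> E\<^sup>*\<^sup>* v x \<or> \<not> E\<^sup>*\<^sup>* v y"
    using \<open>\<not> E\<^sup>*\<^sup>* x y\<close> sym by (meson rtranclp_trans sympD)
  ultimately show ?thesis using that by blast
qed

lemma min_degree_le_degree: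
  "finite V \<Longrightarrow> x \<in> V \<Longrightarrow> min_degree V E \<le> degree V E x"
  unfolding min_degree_def by (rule Min_le) auto

lemma max_degree_attained:
  assumes "finite V" and "V \<noteq> {}"
  obtains v where "v \<in> V" and "degree V E v = max_degree V E"
proof -
  have "max_degree V E \<in> degree V E ` V"
    unfolding max_degree_def using assms by (intro Max_in) auto
  then show ?thesis using that by auto
qed

lemma neighbour_avoiding:
  assumes "degree V E x \<ge> 2"
  obtains s where "E x s" and "s \<noteq> w"
proof (rule ccontr)
  assume "\<not> thesis"
  with that have "nbhd V E x \<subseteq> {w}" unfolding nbhd_def by blast
  then have "degree V E x \<le> 1"
    unfolding degree_def using card_mono[of "{w}"] by fastforce
  with assms show False by simp
qed

lemma gamma_t_le:
  "total_dominating V E T \<Longrightarrow> gamma_t V E \<le> card T"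
  unfolding gamma_t_def by (rule Least_le) blast

lemma gamma_t_attained:
  assumes "total_dominating V E T"
  obtains S where "total_dominating V E S" and "card S = gamma_t V E"
  using LeastI_ex[of "\<lambda>k. \<exists>S. total_dominating V E S \<and> card S = k"] assms that
  unfolding gamma_t_def by blast

lemma delete_vertex_total_dominating:
  assumes "simple_graph V E" and "\<forall>x\<in>V. degree V E x \<ge> 2"
  shows "total_dominating (V - {v}) (del_vertex_rel E v) (V - {v})"
  unfolding total_dominating_def del_vertex_rel_def
proof (intro conjI ballI)
  fix x assume x: "x \<in> V - {v}"
  then have "degree V E x \<ge> 2" using assms(2) by blast
  then obtain s where "E x s" "s \<noteq> v" by (rule neighbour_avoiding)
  then show "\<exists>s\<in>V - {v}. E x s \<and> x \<noteq> v \<and> s \<noteq> v"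
    using x simple_graphD(5)[OF assms(1)] by blast
qed simp

text \<open>With minimum degree at least two no vertex is a leaf, so criticality
  applies to every vertex.\<close>

lemma critical_delete_vertex:
  assumes "simple_graph V E" and "gamma_t_critical V E"
    and "\<forall>x\<in>V. degree V E x \<ge> 2" and "v \<in> V"
  shows "gamma_t (V - {v}) (del_vertex_rel E v) < gamma_t V E"
proof -
  have "\<not> is_leaf V E u" if "E v u" for u
  proof -
    have "u \<in> V" using that simple_graphD(5)[OF assms(1)] by blast
    then have "degree V E u \<ge> 2" using assms(3) by blast
    then show ?thesis unfolding is_leaf_def by simp
  qed
  then show ?thesis using assms(2,4) unfolding gamma_t_critical_def by blast
qed

text \<open>A total dominating set of G - v that is smaller than \<gamma>_t(G) contains no
  neighbour of v: such a neighbour would also dominate v.\<close>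

lemma small_tds_avoids_nbhd:
  assumes S: "total_dominating (V - {v}) (del_vertex_rel E v) S"
    and small: "card S < gamma_t V E"
  shows "S \<inter> nbhd V E v = {}"
proof (rule ccontr)
  assume "S \<inter> nbhd V E v \<noteq> {}"
  then obtain a where a: "a \<in> S" "E v a" unfolding nbhd_def by blast
  have "total_dominating V E S"
    unfolding total_dominating_def
  proof (intro conjI ballI)
    show "S \<subseteq> V" using S unfolding total_dominating_def by blast
    fix x assume "x \<in> V"
    show "\<exists>s\<in>S. E x s"
    proof (cases "x = v")
      case True with a show ?thesis by blast
    next
      case False
      with \<open>x \<in> V\<close> show ?thesis
        using S unfolding total_dominating_def del_vertex_rel_def by blast
    qed
  qed
  then show False using gamma_t_le small by fastforce
qed

lemma disconnected_total_dominating: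
  assumes G: "simple_graph V E" and deg: "\<forall>x\<in>V. degree V E x \<ge> 2"
    and S: "total_dominating (V - {v}) (del_vertex_rel E v) S"
    and S_avoids: "S \<inter> nbhd V E v = {}"
    and d: "\<not> E\<^sup>*\<^sup>* v d" and u: "E v u"
  shows "total_dominating V E ((V - (nbhd V E v \<union> {v, d})) \<union> {u})"
    (is "total_dominating V E ?T")
  unfolding total_dominating_def
proof (intro conjI ballI)
  show "?T \<subseteq> V" using simple_graphD(5)[OF G] u by blast
  fix x assume x: "x \<in> V"
  show "\<exists>s\<in>?T. E x s"
  proof (cases "E\<^sup>*\<^sup>* v x")
    case reach: True
    show ?thesis
    proof (cases "x = v")
      case True with u show ?thesis by blast
    next
      case False
      then obtain s where s: "s \<in> S" "E x s" "s \<noteq> v"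
        using S x unfolding total_dominating_def del_vertex_rel_def by blast
      have "s \<noteq> d" using reach s(2) d by (meson rtranclp.rtrancl_into_rtrancl)
      then show ?thesis
        using s S_avoids simple_graphD(5)[OF G] unfolding nbhd_def by blast
    qed
  next
    case unreach: False
    have "degree V E x \<ge> 2" using deg x by blast
    then obtain s where s: "E x s" "s \<noteq> d" by (rule neighbour_avoiding)
    have "\<not> E\<^sup>*\<^sup>* v s"
      using unreach s(1) simple_graphD(2)[OF G] by (meson rtranclp.rtrancl_into_rtrancl)
    then have "s \<notin> nbhd V E v \<union> {v}" unfolding nbhd_def by auto
    then show ?thesis using s simple_graphD(5)[OF G] by blast
  qed
qed

lemma card_constructed_set:
  assumes "finite V" and "v \<in> V" and "d \<in> V" and "\<not> E\<^sup>*\<^sup>* v d"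
    and "\<And>x. \<not> E x x"
  shows "card ((V - (nbhd V E v \<union> {v, d})) \<union> {u}) + degree V E v + 1 \<le> card V"
proof -
  let ?U = "nbhd V E v \<union> {v, d}"
  have U_sub: "?U \<subseteq> V" using assms(2,3) unfolding nbhd_def by blast
  have "d \<notin> nbhd V E v" and "d \<noteq> v" and "v \<notin> nbhd V E v"
    using assms(4,5) unfolding nbhd_def by auto
  then have "card ?U = degree V E v + 2"
    using finite_subset[OF U_sub assms(1)] unfolding degree_def by simp
  moreover have "card (V - ?U) = card V - card ?U"
    using card_Diff_subset[OF finite_subset[OF U_sub assms(1)] U_sub] .
  moreover have "card ?U \<le> card V" using card_mono[OF assms(1) U_sub] .
  moreover have "card ((V - ?U) \<union> {u}) \<le> card (V - ?U) + 1"
    using card_Un_le[of "V - ?U" "{u}"] by simp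
  ultimately show ?thesis by linarith
qed

theorem mainTheorem3:
  fixes V :: "'a set" and E :: "'a \<Rightarrow> 'a \<Rightarrow> bool" and n :: nat
  assumes "simple_graph V E"
    and "V \<noteq> {}"
    and "card V = n"
    and "gamma_t_critical V E"
    and "gamma_t V E = n - max_degree V E"
    and "min_degree V E \<ge> 2"
  shows "connected_graph V E"
proof (rule ccontr)
  assume disconnected: "\<not> connected_graph V E"
  note fin = simple_graphD(1)[OF assms(1)]
  have deg: "\<forall>x\<in>V. degree V E x \<ge> 2"
    using assms(6) min_degree_le_degree[OF fin] le_trans by blast
  obtain v where v: "v \<in> V" "degree V E v = max_degree V E"
    using max_degree_attained[OF fin assms(2)] .
  obtain S where S: "total_dominating (V - {v}) (del_vertex_rel E v) S"
      "card S = gamma_t (V - {v}) (del_vertex_rel E v)"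
    using gamma_t_attained[OF delete_vertex_total_dominating[OF assms(1) deg]] .
  have "S \<inter> nbhd V E v = {}"
    using small_tds_avoids_nbhd[OF S(1)] S(2)
      critical_delete_vertex[OF assms(1,4) deg v(1)] by simp
  moreover obtain d where d: "d \<in> V" "\<not> E\<^sup>*\<^sup>* v d"
    using disconnected_unreachable[OF assms(1) disconnected v(1)] .
  moreover obtain u where "E v u"
    using neighbour_avoiding[of V E v v] deg v(1) by blast
  ultimately have "gamma_t V E \<le> card ((V - (nbhd V E v \<union> {v, d})) \<union> {u})"
    using gamma_t_le disconnected_total_dominating[OF assms(1) deg S(1)] by blast
  moreover have "card ((V - (nbhd V E v \<union> {v, d})) \<union> {u}) + degree V E v + 1 \<le> n"
    using card_constructed_set[OF fin v(1) d simple_graphD(3)[OF assms(1)]] assms(3) by simp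
  ultimately show False using assms(5) v(2) by linarith
qed

end
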